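(* Let $(G,H,\mathsf{low},\mathsf{up})$ be an instance of $\textsc{Hom}_<^\star$ where $H$ is a $k$-shifted clique with $k\ge 2$ and segments $V_1<\dots<V_k$ as in the definition. Let $R=V_k=\{v_p,\dots,v_h\}$ and $L=V(H)\setminus R$. Suppose there exists a solution $\phi:G\to H$ and let $X=\phi^{-1}(R)$. Define $\mathsf{low}',\mathsf{up}':X\to\{p,\dots,h\}$ by $\mathsf{low}'(u)=\max(\mathsf{low}(u),p)$ and $\mathsf{up}'(u)=\mathsf{up}(u)$, and let $f$ be a minimum solution of the instance $(G[X],H[R],\mathsf{low}',\mathsf{up}')$ of $\textsc{Hom}_<^\star$. Then the map $\phi':V(G)\to V(H)$ given by $\phi'(u)=f(u)$ for $u\in X$ and $\phi'(u)=\phi(u)$ for $u\notin X$ is a solution of the original instance $(G,H,\mathsf{low},\mathsf{up})$.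
   Context: An ordered graph is a (simple) graph whose vertex set is equipped with a total order $\le$; induced subgraphs inherit the order. For ordered graphs $G,H$, an ordered homomorphism from $G$ to $H$ is a map $f:V(G)\to V(H)$ such that (1) $uv\in E(G)$ implies $f(u)f(v)\in E(H)$, and (2) $u\le v$ implies $f(u)\le f(v)$. The vertices of $H$ are $v_1<\dots<v_h$, identified with indices $1,\dots,h$. A segment is a set of vertices consecutive in the order. $H$ is a $k$-shifted clique if $V(H)$ can be partitioned into segments $V_1,\dots,V_k$ with $V_i<V_{i+1}$ for $i\in[k-1]$, each inducing a clique, such that for every $i>1$ and all $u,u'\in V_i$ with $u<u'$ we have $N(u')\cap\bigcup_{j<i}V_j\subseteq N(u)\cap\bigcup_{j<i}V_j$. An instance of $\textsc{Hom}_<^\star$ consists of ordered graphs $G,H$ and functions $\mathsf{low},\mathsf{up}$ from $V(G)$ to indices of vertices of $H$; a solution is an ordered homomorphism $f:G\to H$ with $\mathsf{low}(v)\le f(v)\le\mathsf{up}(v)$ for all $v$. A solution $f$ is minimum if $f(v)\le f'(v)$ for every solution $f'$ and every vertex $v$. *)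

theory Defs
  imports Main
begin

text \<open>An ordered graph: a finite vertex set V in a linearly ordered type (the order
of the type is the vertex order) together with a symmetric irreflexive edge
relation E supported on V. The target graph H has vertices identified with
natural-number indices; the order is the order of nat.\<close>

definition ograph :: "'a set \<Rightarrow> ('a \<Rightarrow> 'a \<Rightarrow> bool) \<Rightarrow> bool" where
  "ograph V E \<longleftrightarrow> finite V \<and>
     (\<forall>u v. E u v \<longrightarrow> u \<in> V \<and> v \<in> V \<and> u \<noteq> v \<and> E v u)"

definition induced :: "('a \<Rightarrow> 'a \<Rightarrow> bool) \<Rightarrow> 'a set \<Rightarrow> 'a \<Rightarrow> 'a \<Rightarrow> bool" where
  "induced E X = (\<lambda>u v. u \<in> X \<and> v \<in> X \<and> E u v)"

definition ord_hom :: "('a::linorder) set \<Rightarrow> ('a \<Rightarrow> 'a \<Rightarrow> bool)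
    \<Rightarrow> nat set \<Rightarrow> (nat \<Rightarrow> nat \<Rightarrow> bool) \<Rightarrow> ('a \<Rightarrow> nat) \<Rightarrow> bool" where
  "ord_hom VG EG VH EH f \<longleftrightarrow>
     (\<forall>u\<in>VG. f u \<in> VH) \<and>
     (\<forall>u\<in>VG. \<forall>v\<in>VG. EG u v \<longrightarrow> EH (f u) (f v)) \<and>
     (\<forall>u\<in>VG. \<forall>v\<in>VG. u \<le> v \<longrightarrow> f u \<le> f v)"

definition hom_solution :: "('a::linorder) set \<Rightarrow> ('a \<Rightarrow> 'a \<Rightarrow> bool)
    \<Rightarrow> nat set \<Rightarrow> (nat \<Rightarrow> nat \<Rightarrow> bool) \<Rightarrow> ('a \<Rightarrow> nat) \<Rightarrow> ('a \<Rightarrow> nat) \<Rightarrow> ('a \<Rightarrow> nat) \<Rightarrow> bool" where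
  "hom_solution VG EG VH EH low up f \<longleftrightarrow>
     ord_hom VG EG VH EH f \<and> (\<forall>v\<in>VG. low v \<le> f v \<and> f v \<le> up v)"

definition min_solution :: "('a::linorder) set \<Rightarrow> ('a \<Rightarrow> 'a \<Rightarrow> bool)
    \<Rightarrow> nat set \<Rightarrow> (nat \<Rightarrow> nat \<Rightarrow> bool) \<Rightarrow> ('a \<Rightarrow> nat) \<Rightarrow> ('a \<Rightarrow> nat) \<Rightarrow> ('a \<Rightarrow> nat) \<Rightarrow> bool" where
  "min_solution VG EG VH EH low up f \<longleftrightarrow>
     hom_solution VG EG VH EH low up f \<and>
     (\<forall>f'. hom_solution VG EG VH EH low up f' \<longrightarrow> (\<forall>v\<in>VG. f v \<le> f' v))"

text \<open>H with vertex set {1..h} is a k-shifted clique with segments given by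
boundaries b 0 = 1 < b 1 < ... < b k = h + 1, i.e. V_i = {b (i-1) ..< b i}
for i = 1..k (segments nonempty, consecutive, partitioning {1..h}).\<close>
definition seg :: "(nat \<Rightarrow> nat) \<Rightarrow> nat \<Rightarrow> nat set" where
  "seg b i = {b (i - 1) ..< b i}"

definition shifted_clique :: "nat \<Rightarrow> (nat \<Rightarrow> nat \<Rightarrow> bool) \<Rightarrow> nat \<Rightarrow> (nat \<Rightarrow> nat) \<Rightarrow> bool" where
  "shifted_clique h EH k b \<longleftrightarrow>
     b 0 = 1 \<and> b k = h + 1 \<and> (\<forall>i<k. b i < b (Suc i)) \<and>
     (\<forall>i\<in>{1..k}. \<forall>u\<in>seg b i. \<forall>v\<in>seg b i. u \<noteq> v \<longrightarrow> EH u v) \<and>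
     (\<forall>i\<in>{2..k}. \<forall>u\<in>seg b i. \<forall>u'\<in>seg b i. u < u' \<longrightarrow>
        (\<forall>w \<in> (\<Union>j\<in>{1..<i}. seg b j). EH u' w \<longrightarrow> EH u w))"

end

theory Submission
  imports Defs
begin

text \<open>In a shifted clique the neighbourhood in L of a vertex of the last segment R
contains the neighbourhood in L of every later vertex of R. Since \<phi> restricted to X
is a solution of the sub-instance and f is its minimum solution, f u \<le> \<phi> u for
u \<in> X; hence an edge from \<phi> u into L survives when \<phi> u is replaced by f u. All
other constraints are local to X or to its complement, and the threshold separating
R from L keeps the glued map monotone.\<close>

lemma seg_cover:
  "b 0 \<le> x \<Longrightarrow> x < b m \<Longrightarrow> \<exists>j\<in>{1..m}. x \<in> seg b j"
proof (induction m)
  case 0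
  then show ?case by simp
next
  case (Suc m)
  show ?case
  proof (cases "x < b m")
    case True
    then show ?thesis using Suc by fastforce
  next
    case False
    then have "x \<in> seg b (Suc m)" using Suc.prems by (simp add: seg_def)
    then show ?thesis by force
  qed
qed

lemma shifted_clique_bound_mono:
  assumes sc: "shifted_clique h EH k b" and "i \<le> j" and "j \<le> k"
  shows "b i \<le> b j"
  using \<open>i \<le> j\<close>
proof (induction j rule: dec_induct)
  case (step n)
  then have "n < k" using \<open>j \<le> k\<close> by simp
  then have "b n < b (Suc n)" using sc by (simp add: shifted_clique_def)
  then show ?case using step.IH by simp
qed simp

lemma shifted_clique_last_seg:
  assumes sc: "shifted_clique h EH k b" and "0 < k"
  shows "seg b k = {x \<in> {1..h}. b (k - 1) \<le> x}"
proof -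
  have "seg b k = {b (k - 1)..<h + 1}" using sc by (simp add: seg_def shifted_clique_def)
  also have "\<dots> = {x \<in> {1..h}. b (k - 1) \<le> x}"
  proof -
    have "1 \<le> b (k - 1)"
      using shifted_clique_bound_mono[OF sc, of 0 "k - 1"] sc by (simp add: shifted_clique_def)
    then show ?thesis by auto
  qed
  finally show ?thesis .
qed

lemma shifted_clique_last_seg_lower_neighbour:
  assumes sc: "shifted_clique h EH k b" and "2 \<le> k"
    and u: "u \<in> seg b k" and u': "u' \<in> seg b k" "u \<le> u'"
    and w: "w \<in> {1..<b (k - 1)}" and "EH u' w"
  shows "EH u w"
proof (cases "u = u'")
  case False
  have "b 0 = 1" using sc by (simp add: shifted_clique_def)
  then obtain j where "j \<in> {1..k - 1}" "w \<in> seg b j"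
    using seg_cover[of b w "k - 1"] w by auto
  then have "w \<in> (\<Union>j\<in>{1..<k}. seg b j)" using \<open>2 \<le> k\<close> by auto
  moreover have "\<forall>u\<in>seg b k. \<forall>u'\<in>seg b k. u < u' \<longrightarrow>
      (\<forall>w \<in> (\<Union>j\<in>{1..<k}. seg b j). EH u' w \<longrightarrow> EH u w)"
  proof -
    have "k \<in> {2..k}" using \<open>2 \<le> k\<close> by simp
    then show ?thesis using sc unfolding shifted_clique_def by blast
  qed
  moreover have "u < u'" using \<open>u \<le> u'\<close> False by simp
  ultimately show ?thesis using u u' \<open>EH u' w\<close> by blast
qed (use \<open>EH u' w\<close> in simp)

lemma min_solution_le:
  "min_solution VG EG VH EH low up f \<Longrightarrow> hom_solution VG EG VH EH low up g
    \<Longrightarrow> v \<in> VG \<Longrightarrow> f v \<le> g v"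
  by (simp add: min_solution_def)

lemma hom_solution_restrict_upper:
  assumes "hom_solution VG EG VH EH low up \<phi>" and "R = {x \<in> VH. c \<le> x}"
  shows "hom_solution {u \<in> VG. \<phi> u \<in> R} (induced EG {u \<in> VG. \<phi> u \<in> R})
           R (induced EH R) (\<lambda>u. max (low u) c) up \<phi>"
  using assms by (auto simp: hom_solution_def ord_hom_def induced_def)

lemma hom_solution_glue_upper:
  fixes VG :: "'a::linorder set" and R :: "nat set" and \<phi> f :: "'a \<Rightarrow> nat"
  defines "X \<equiv> {u \<in> VG. \<phi> u \<in> R}"
  assumes phi: "hom_solution VG EG VH EH low up \<phi>"
    and f: "hom_solution X (induced EG X) R (induced EH R) low' up f"
    and R: "R = {x \<in> VH. c \<le> x}"
    and low': "\<forall>u\<in>X. low u \<le> low' u"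
    and EG_sym: "\<And>u v. EG u v \<Longrightarrow> EG v u" and EH_sym: "\<And>x y. EH x y \<Longrightarrow> EH y x"
    and cross: "\<And>u v. u \<in> X \<Longrightarrow> v \<in> VG \<Longrightarrow> v \<notin> X \<Longrightarrow> EG u v \<Longrightarrow> EH (f u) (\<phi> v)"
  shows "hom_solution VG EG VH EH low up (\<lambda>u. if u \<in> X then f u else \<phi> u)"
proof -
  have phi_hom: "\<forall>u\<in>VG. \<phi> u \<in> VH" "\<forall>u\<in>VG. \<forall>v\<in>VG. EG u v \<longrightarrow> EH (\<phi> u) (\<phi> v)"
    "\<forall>u\<in>VG. \<forall>v\<in>VG. u \<le> v \<longrightarrow> \<phi> u \<le> \<phi> v" "\<forall>v\<in>VG. low v \<le> \<phi> v \<and> \<phi> v \<le> up v"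
    using phi by (auto simp: hom_solution_def ord_hom_def)
  have f_hom: "\<forall>u\<in>X. f u \<in> VH \<and> c \<le> f u" "\<forall>u\<in>X. \<forall>v\<in>X. EG u v \<longrightarrow> EH (f u) (f v)"
    "\<forall>u\<in>X. \<forall>v\<in>X. u \<le> v \<longrightarrow> f u \<le> f v" "\<forall>v\<in>X. low v \<le> f v \<and> f v \<le> up v"
    using f low' R by (fastforce simp: hom_solution_def ord_hom_def induced_def)+
  have X_iff: "\<And>u. u \<in> VG \<Longrightarrow> u \<in> X \<longleftrightarrow> c \<le> \<phi> u"
    using phi_hom(1) R by (auto simp: X_def)
  show ?thesis
    unfolding hom_solution_def ord_hom_def
  proof (intro conjI ballI impI)
    fix u assume "u \<in> VG"
    then show "(if u \<in> X then f u else \<phi> u) \<in> VH"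
      "low u \<le> (if u \<in> X then f u else \<phi> u)" "(if u \<in> X then f u else \<phi> u) \<le> up u"
      using phi_hom(1,4) f_hom(1,4) by auto
  next
    fix u v assume "u \<in> VG" "v \<in> VG" "EG u v"
    then show "EH (if u \<in> X then f u else \<phi> u) (if v \<in> X then f v else \<phi> v)"
      using phi_hom(2) f_hom(2) cross EG_sym EH_sym by auto
  next
    fix u v assume uv: "u \<in> VG" "v \<in> VG" "u \<le> v"
    then show "(if u \<in> X then f u else \<phi> u) \<le> (if v \<in> X then f v else \<phi> v)"
      using phi_hom(3) f_hom(1,3) X_iff[of u] X_iff[of v] by (auto intro: order_trans)
  qed
qed

theorem lemma2:
  fixes VG :: "('a::linorder) set" and EG :: "'a \<Rightarrow> 'a \<Rightarrow> bool"
    and h :: nat and EH :: "nat \<Rightarrow> nat \<Rightarrow> bool"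
    and low up :: "'a \<Rightarrow> nat" and k :: nat and b :: "nat \<Rightarrow> nat"
    and \<phi> f :: "'a \<Rightarrow> nat"
  assumes G: "ograph VG EG"
    and H: "ograph {1..h} EH"
    and lowup: "\<forall>u\<in>VG. low u \<in> {1..h} \<and> up u \<in> {1..h}"
    and k: "k \<ge> 2"
    and sc: "shifted_clique h EH k b"
    and phi: "hom_solution VG EG {1..h} EH low up \<phi>"
    and fmin: "min_solution {u \<in> VG. \<phi> u \<in> seg b k} (induced EG {u \<in> VG. \<phi> u \<in> seg b k})
                 (seg b k) (induced EH (seg b k))
                 (\<lambda>u. max (low u) (b (k - 1))) up f"
  shows "hom_solution VG EG {1..h} EH low up
           (\<lambda>u. if u \<in> {u \<in> VG. \<phi> u \<in> seg b k} then f u else \<phi> u)"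
proof -
  define X where "X = {u \<in> VG. \<phi> u \<in> seg b k}"
  have R: "seg b k = {x \<in> {1..h}. b (k - 1) \<le> x}"
    using shifted_clique_last_seg[OF sc] k by simp
  have f_sol: "hom_solution X (induced EG X) (seg b k) (induced EH (seg b k))
                 (\<lambda>u. max (low u) (b (k - 1))) up f"
    using fmin by (simp add: min_solution_def X_def)
  have f_le_phi: "f u \<le> \<phi> u" if "u \<in> X" for u
    using min_solution_le[OF fmin hom_solution_restrict_upper[OF phi R]] that
    by (simp add: X_def)
  have cross: "EH (f u) (\<phi> v)" if u: "u \<in> X" and v: "v \<in> VG" "v \<notin> X" and "EG u v" for u v
  proof (rule shifted_clique_last_seg_lower_neighbour[OF sc k])
    show "f u \<in> seg b k" "\<phi> u \<in> seg b k" "f u \<le> \<phi> u"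
      using f_sol u f_le_phi by (auto simp: hom_solution_def ord_hom_def X_def)
    show "\<phi> v \<in> {1..<b (k - 1)}" "EH (\<phi> u) (\<phi> v)"
      using phi u v \<open>EG u v\<close> R by (auto simp: hom_solution_def ord_hom_def X_def)
  qed
  show ?thesis
    using hom_solution_glue_upper[OF phi f_sol[unfolded X_def] R _ _ _ cross[unfolded X_def]]
      G H by (auto simp: ograph_def X_def)
qed

end
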